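(* Let $k\ge 2$, $p\in(0,1)$, $q=1-p$. Then $M^{(k)}_1(p)=k-1$, and for all $n\ge 2$, $$M^{(k)}_n(p)=\frac1q\sum_{0<i<n} s^{(k)}_i\,(p^{k-1}q)^i\,M^{(k)}_{n-i}(p)\;+\;L^{(k)}_n(p),$$ where $$L^{(k)}_n(p)=(p^{k-1}q)^n\,\frac1q\sum_{j=k}^{(k-1)n} j\,d^{(k)}_{n,j}\,(1/p)^j,$$ and for $k\le j\le (k-1)n$, $$d^{(k)}_{n,j}=\binom{kn-2-j}{n-2}-\sum_{\ell=1}^{\,n-\lceil j/(k-1)\rceil} s^{(k)}_\ell\binom{k(n-\ell)-1-j}{n-\ell-1},$$ with $d^{(k)}_{n,j}=0$ for other $j$.
   Context: Matchbox process: fix integers $k\ge 2$, $n\ge 1$ and $p\in(0,1)$, $q=1-p$. Initially $k$ boxes each contain $n$ matches. At each time step, independently of the past, with probability $p$ a match is removed from a box currently containing the largest number of matches ("big-chooser"), and with probability $q$ a match is removed from a box currently containing the smallest number of matches ("little-chooser"); ties are broken arbitrarily (this does not affect the quantities below). The process is run until the first time some box is empty. The residue $X^{(k)}_n(p)$ is the total number of matches in the other $k-1$ boxes at that time, and $M^{(k)}_n(p)=\mathbb{E}[X^{(k)}_n(p)]$ is the expected residue. For $i\ge1$, $s^{(k)}_i=\frac{k-1}{ki-1}\binom{ki-1}{i-1}$. *)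

theory Defs
  imports "HOL-Probability.Probability"
begin

text \<open>Configuration of the k boxes: a list of length k of match counts.
  dec_first v xs removes one match from the first box holding exactly v matches
  (tie-breaking convention; irrelevant for the residue distribution).\<close>

fun dec_first :: "nat \<Rightarrow> nat list \<Rightarrow> nat list" where
  "dec_first v [] = []"
| "dec_first v (x # xs) = (if x = v then (x - 1) # xs else x # dec_first v xs)"

definition take_big :: "nat list \<Rightarrow> nat list" where
  "take_big xs = dec_first (Max (set xs)) xs"

definition take_little :: "nat list \<Rightarrow> nat list" where
  "take_little xs = dec_first (Min (set xs)) xs"

lemma sum_list_dec_first:
  "v \<in> set xs \<Longrightarrow> 0 < v \<Longrightarrow> sum_list (dec_first v xs) < sum_list xs"
  by (induction xs) auto

text \<open>Distribution of the residue (total number of matches left when the first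
  box becomes empty), started from configuration xs.\<close>

function residue_dist :: "real \<Rightarrow> nat list \<Rightarrow> nat pmf" where
  "residue_dist p xs =
     (if xs = [] \<or> 0 \<in> set xs then return_pmf (sum_list xs)
      else (let A = residue_dist p (take_big xs); B = residue_dist p (take_little xs)
            in bind_pmf (bernoulli_pmf p) (\<lambda>b. if b then A else B)))"
  by auto
termination
proof (relation "Wellfounded.measure (\<lambda>(p, xs). sum_list xs)")
  show "wf (Wellfounded.measure (\<lambda>(p, xs). sum_list xs))" by simp
next
  fix p :: real and xs :: "nat list"
  assume h: "\<not> (xs = [] \<or> 0 \<in> set xs)"
  then have "Max (set xs) \<in> set xs" "Min (set xs) \<in> set xs" by auto
  moreover have "0 < Max (set xs)" "0 < Min (set xs)" using h calculation
    by (metis gr0I)+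
  ultimately show "((p, take_big xs), p, xs) \<in> Wellfounded.measure (\<lambda>(p, xs). sum_list xs)"
    and "((p, take_little xs), p, xs) \<in> Wellfounded.measure (\<lambda>(p, xs). sum_list xs)"
    by (auto simp: take_big_def take_little_def sum_list_dec_first)
qed

declare residue_dist.simps [simp del]

definition M :: "nat \<Rightarrow> nat \<Rightarrow> real \<Rightarrow> real" where
  "M k n p = measure_pmf.expectation (residue_dist p (replicate k n)) real"

definition s :: "nat \<Rightarrow> nat \<Rightarrow> real" where
  "s k i = (real k - 1) / (real k * real i - 1) * real ((k * i - 1) choose (i - 1))"

definition d :: "nat \<Rightarrow> nat \<Rightarrow> nat \<Rightarrow> real" where
  "d k n j = (if k \<le> j \<and> j \<le> (k - 1) * n then
      real ((k * n - 2 - j) choose (n - 2))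
      - (\<Sum>l = 1..n - nat \<lceil>real j / real (k - 1)\<rceil>.
           s k l * real ((k * (n - l) - 1 - j) choose (n - l - 1)))
    else 0)"

definition L :: "nat \<Rightarrow> nat \<Rightarrow> real \<Rightarrow> real" where
  "L k n p = (p ^ (k - 1) * (1 - p)) ^ n * (1 / (1 - p)) *
     (\<Sum>j = k..(k - 1) * n. real j * d k n j * (1 / p) ^ j)"

end

theory Submission
  imports Defs
begin

text \<open>
  Little-chooser takes from a smallest box and big-chooser from a largest one, so every
  reachable configuration consists of one box with \<open>a\<close> matches and \<open>k - 1\<close> boxes holding
  \<open>b\<close> or \<open>b + 1\<close> matches, \<open>a \<le> b\<close>. It is determined by \<open>a\<close> and the excess \<open>h\<close> of the
  other boxes over \<open>(k - 1) a\<close>: a big step lowers \<open>h\<close> by one, a little step lowers \<open>a\<close> and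
  raises \<open>h\<close> by \<open>k - 1\<close>, at \<open>h = 0\<close> (all boxes equal) either step acts like a little one,
  and the residue is \<open>h\<close> when \<open>a\<close> reaches 0.
  Starting from \<open>(n, 0)\<close>, i.e. from \<open>(n - 1, k - 1)\<close>, split each walk at its first return
  to \<open>h = 0\<close>. By the cycle lemma the first returns after \<open>u\<close> little steps are counted by
  \<open>s\<^sub>u\<^sub>+\<^sub>1\<close>, and the walk restarts with \<open>n - 1 - u\<close> matches in every box: this is the
  convolution term. The walks reaching \<open>a = 0\<close> without a return are all walks minus those
  with a first return, which is what \<open>d\<^sub>n\<^sub>,\<^sub>j\<close> counts: this is \<open>L\<^sub>n\<close>.
\<close>

section \<open>Counting walks\<close>

text \<open>By the cycle lemma, \<open>ballot k h u\<close> counts the walks with steps \<open>-1\<close> and \<open>+(k - 1)\<close>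
  from \<open>h\<close> that first reach 0 after \<open>u\<close> up-steps.\<close>

definition ballot :: "nat \<Rightarrow> nat \<Rightarrow> nat \<Rightarrow> real" where
  "ballot k h u =
     (if h = 0 \<and> u = 0 then 1 else real h / real (h + k * u) * real ((h + k * u) choose u))"

lemma ballot_0_right [simp]: "ballot k h 0 = 1"
  by (simp add: ballot_def)

lemma ballot_0_left [simp]: "0 < u \<Longrightarrow> ballot k 0 u = 0"
  by (simp add: ballot_def)

lemma ballot_Suc_Suc:
  assumes "0 < k"
  shows "ballot k (Suc h) (Suc v) = ballot k h (Suc v) + ballot k (h + k) v"
proof -
  define N where "N = h + k * Suc v"
  have "N > 0" using assms by (simp add: N_def)
  have "Suc v \<le> k * Suc v" using assms mult_le_mono1[of 1 k "Suc v"] by simp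
  then obtain b where b: "N = Suc (v + b)"
    unfolding N_def by (metis add_Suc le_Suc_ex trans_le_add2)
  define c where "c = real (N choose v)"
  have up: "real (Suc N choose Suc v) = c * real (Suc N) / real (Suc v)"
    using Suc_times_binomial_eq[of N v] unfolding c_def
    by (simp add: field_simps del: of_nat_Suc flip: of_nat_mult)
  have side: "real (N choose Suc v) = c * (real N - real v) / real (Suc v)"
    using Suc_times_binomial_add[of v b] unfolding c_def b
    by (simp add: field_simps del: of_nat_Suc flip: of_nat_mult)
  have N: "Suc h + k * Suc v = Suc N" "h + k * Suc v = N" "h + k + k * v = N"
    by (simp_all add: N_def)
  have lhs: "ballot k (Suc h) (Suc v) = c * real (Suc h) / real (Suc v)"
    unfolding ballot_def N up by (simp del: of_nat_Suc)
  have "ballot k h (Suc v) + ballot k (h + k) v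
      = real h / real N * real (N choose Suc v) + (real h + real k) / real N * c"
    unfolding ballot_def N c_def using assms by simp
  also have "\<dots> = c / (real N * real (Suc v))
      * (real h * (real N - real v) + (real h + real k) * real (Suc v))"
    using \<open>N > 0\<close> unfolding side by (simp add: field_simps del: of_nat_Suc)
  also have "real h * (real N - real v) + (real h + real k) * real (Suc v) = real (Suc h) * real N"
    by (simp add: N_def algebra_simps)
  finally show ?thesis
    unfolding lhs using \<open>N > 0\<close> by (simp del: of_nat_Suc)
qed

text \<open>Walks from state \<open>(a, h)\<close> to \<open>(0, j)\<close> ending with a little step: \<open>free_paths\<close>
  ignores the boundary \<open>h = 0\<close>, \<open>exit_paths\<close> counts those that avoid it while \<open>a > 0\<close>.\<close>

definition free_paths :: "nat \<Rightarrow> nat \<Rightarrow> nat \<Rightarrow> nat \<Rightarrow> real" where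
  "free_paths k a h j =
     (if a = 0 then of_bool (h = j)
      else if j < k * a + h then real ((k * a + h - j - 1) choose (a - 1)) else 0)"

lemma free_paths_Suc_Suc:
  "free_paths k (Suc a) (Suc h) j = free_paths k (Suc a) h j + free_paths k a (h + k) j"
proof (cases "j < k * Suc a + h")
  case True
  define m where "m = k * Suc a + h - j - 1"
  have "k * Suc a + Suc h - j - 1 = Suc m" "k * Suc a + h - j - 1 = m" "k * a + (h + k) - j - 1 = m"
    using True by (simp_all add: m_def)
  then show ?thesis
    using True by (cases a) (simp_all add: free_paths_def)
next
  case False
  then show ?thesis
    by (cases a) (auto simp: free_paths_def)
qed

lemma free_paths_eq_0:
  assumes "(k - 1) * a + h < j"
  shows "free_paths k a h j = 0"
proof (cases "a = 0 \<or> \<not> j < k * a + h")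
  case False
  then have "k * a + h - j - 1 < a - 1"
    using assms by (cases k) (auto simp: algebra_simps)
  then show ?thesis
    using False by (simp add: free_paths_def binomial_eq_0)
qed (use assms in \<open>auto simp: free_paths_def\<close>)

fun exit_paths :: "nat \<Rightarrow> nat \<Rightarrow> nat \<Rightarrow> nat \<Rightarrow> real" where
  "exit_paths k 0 h j = of_bool (h = j)"
| "exit_paths k (Suc a) 0 j = 0"
| "exit_paths k (Suc a) (Suc h) j = exit_paths k (Suc a) h j + exit_paths k a (h + k) j"

lemma exit_paths_first_passage:
  assumes "0 < k"
  shows "exit_paths k a h j = free_paths k a h j - (\<Sum>u<a. ballot k h u * free_paths k (a - u) 0 j)"
  using assms
proof (induction k a h j rule: exit_paths.induct)
  case (1 k h j)
  then show ?case by (simp add: free_paths_def)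
next
  case (2 k a j)
  have "(\<Sum>u<Suc a. ballot k 0 u * free_paths k (Suc a - u) 0 j) = free_paths k (Suc a) 0 j"
    by (subst sum.lessThan_Suc_shift) simp
  then show ?case by simp
next
  case (3 k a h j)
  have "(\<Sum>u<Suc a. ballot k (Suc h) u * free_paths k (Suc a - u) 0 j)
      = free_paths k (Suc a) 0 j + (\<Sum>u<a. ballot k (Suc h) (Suc u) * free_paths k (a - u) 0 j)"
    by (subst sum.lessThan_Suc_shift) simp
  also have "\<dots> = free_paths k (Suc a) 0 j + (\<Sum>u<a. ballot k h (Suc u) * free_paths k (a - u) 0 j)
      + (\<Sum>u<a. ballot k (h + k) u * free_paths k (a - u) 0 j)"
    using "3.prems" by (simp add: ballot_Suc_Suc sum.distrib algebra_simps)
  also have "free_paths k (Suc a) 0 j + (\<Sum>u<a. ballot k h (Suc u) * free_paths k (a - u) 0 j)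
      = (\<Sum>u<Suc a. ballot k h u * free_paths k (Suc a - u) 0 j)"
    by (subst sum.lessThan_Suc_shift) simp
  finally show ?case
    using "3.IH" "3.prems" free_paths_Suc_Suc[of k a h j] by simp
qed

lemma exit_paths_eq_0_below:
  "0 < a \<Longrightarrow> j < k \<Longrightarrow> exit_paths k a h j = 0"
proof (induction k a h j rule: exit_paths.induct)
  case (3 k a h j)
  then show ?case by (cases a) auto
qed simp_all

lemma exit_paths_eq_0_above:
  "0 < k \<Longrightarrow> (k - 1) * a + h < j \<Longrightarrow> exit_paths k a h j = 0"
proof (induction k a h j rule: exit_paths.induct)
  case (3 k a h j)
  then have "(k - 1) * a + (h + k) < j"
    by (cases k) (auto simp: algebra_simps)
  with 3 show ?case by simp
qed simp_all

section \<open>The reduced walk\<close>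

fun mean_residue :: "nat \<Rightarrow> real \<Rightarrow> nat \<Rightarrow> nat \<Rightarrow> real" where
  "mean_residue k p 0 h = real h"
| "mean_residue k p (Suc a) 0 = mean_residue k p a (k - 1)"
| "mean_residue k p (Suc a) (Suc h) =
     p * mean_residue k p (Suc a) h + (1 - p) * mean_residue k p a (h + k)"

text \<open>The expected residue split at the first visit to \<open>h = 0\<close>. A walk exiting at residue
  \<open>j\<close> has weight \<open>(1 - p) ^ a * p ^ ((k - 1) * a + h - j)\<close>, written with \<open>(1 / p) ^ j\<close> as
  in \<open>L\<close>; hence \<open>p \<noteq> 0\<close> below.\<close>

definition passage_part :: "nat \<Rightarrow> real \<Rightarrow> nat \<Rightarrow> nat \<Rightarrow> real" where
  "passage_part k p a h =
     (\<Sum>u<a. ballot k h u * p ^ (h + (k - 1) * u) * (1 - p) ^ u * mean_residue k p (a - u) 0)"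

definition exit_sum :: "nat \<Rightarrow> real \<Rightarrow> nat \<Rightarrow> nat \<Rightarrow> real" where
  "exit_sum k p a h = (\<Sum>j\<le>(k - 1) * a + h. real j * exit_paths k a h j * (1 / p) ^ j)"

definition exit_part :: "nat \<Rightarrow> real \<Rightarrow> nat \<Rightarrow> nat \<Rightarrow> real" where
  "exit_part k p a h = (1 - p) ^ a * p ^ ((k - 1) * a + h) * exit_sum k p a h"

lemma passage_part_Suc_Suc:
  assumes "0 < k"
  shows "passage_part k p (Suc a) (Suc h)
    = p * passage_part k p (Suc a) h + (1 - p) * passage_part k p a (h + k)"
proof -
  obtain k' where k: "k = Suc k'"
    using assms gr0_conv_Suc by blast
  define q where "q = 1 - p"
  have pw: "p ^ (Suc h + k' * Suc u) = p * p ^ (h + k' * Suc u)"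
           "p ^ (Suc h + k' * Suc u) = p ^ (h + k + k' * u)" for u
    by (simp_all add: k algebra_simps)
  have "passage_part k p (Suc a) (Suc h) = p ^ Suc h * mean_residue k p (Suc a) 0
      + (\<Sum>u<a. ballot k h (Suc u) * p ^ (Suc h + k' * Suc u) * q ^ Suc u * mean_residue k p (a - u) 0)
      + (\<Sum>u<a. ballot k (h + k) u * p ^ (Suc h + k' * Suc u) * q ^ Suc u * mean_residue k p (a - u) 0)"
    unfolding passage_part_def q_def[symmetric]
    by (subst sum.lessThan_Suc_shift) (simp add: k ballot_Suc_Suc sum.distrib algebra_simps)
  also have "p ^ Suc h * mean_residue k p (Suc a) 0
      + (\<Sum>u<a. ballot k h (Suc u) * p ^ (Suc h + k' * Suc u) * q ^ Suc u * mean_residue k p (a - u) 0)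
      = p * passage_part k p (Suc a) h"
    unfolding passage_part_def q_def[symmetric] pw(1)
    by (subst sum.lessThan_Suc_shift) (simp add: k sum_distrib_left algebra_simps)
  also have "(\<Sum>u<a. ballot k (h + k) u * p ^ (Suc h + k' * Suc u) * q ^ Suc u * mean_residue k p (a - u) 0)
      = q * passage_part k p a (h + k)"
    unfolding passage_part_def q_def[symmetric] pw(2)
    by (simp add: k sum_distrib_left algebra_simps)
  finally show ?thesis
    by (simp add: q_def)
qed

lemma exit_sum_Suc_Suc:
  assumes "0 < k"
  shows "exit_sum k p (Suc a) (Suc h) = exit_sum k p (Suc a) h + exit_sum k p a (h + k)"
proof -
  define B where "B = (k - 1) * Suc a + Suc h"
  have B: "(k - 1) * a + (h + k) = B"
    using assms by (cases k) (simp_all add: B_def)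
  have "exit_paths k (Suc a) h B = 0"
    using assms by (intro exit_paths_eq_0_above) (simp_all add: B_def)
  then have "exit_sum k p (Suc a) h = (\<Sum>j\<le>B. real j * exit_paths k (Suc a) h j * (1 / p) ^ j)"
    by (simp add: exit_sum_def B_def)
  moreover have "exit_sum k p a (h + k) = (\<Sum>j\<le>B. real j * exit_paths k a (h + k) j * (1 / p) ^ j)"
    using B by (simp add: exit_sum_def)
  ultimately show ?thesis
    unfolding exit_sum_def B_def[symmetric] by (simp add: sum.distrib algebra_simps)
qed

lemma exit_part_Suc_Suc:
  assumes "0 < k"
  shows "exit_part k p (Suc a) (Suc h)
    = p * exit_part k p (Suc a) h + (1 - p) * exit_part k p a (h + k)"
proof -
  have "(k - 1) * a + (h + k) = Suc ((k - 1) * Suc a + h)"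
    using assms by (cases k) (simp_all add: algebra_simps)
  then show ?thesis
    unfolding exit_part_def exit_sum_Suc_Suc[OF assms] by (simp add: algebra_simps)
qed

lemma mean_residue_first_passage:
  assumes "0 < k" and "p \<noteq> 0"
  shows "mean_residue k p a h = passage_part k p a h + exit_part k p a h"
  using assms
proof (induction k p a h rule: mean_residue.induct)
  case (1 k p h)
  have "exit_sum k p 0 h = (\<Sum>j\<le>h. if j = h then real h * (1 / p) ^ h else 0)"
    unfolding exit_sum_def by (rule sum.cong) auto
  then have "exit_sum k p 0 h = real h * (1 / p) ^ h"
    by simp
  with "1.prems" show ?case
    by (simp add: passage_part_def exit_part_def power_one_over)
next
  case (2 k p a)
  have "passage_part k p (Suc a) 0 = mean_residue k p a (k - 1)"
    unfolding passage_part_def by (subst sum.lessThan_Suc_shift) simp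
  then show ?case
    by (simp add: exit_part_def exit_sum_def)
next
  case (3 k p a h)
  then show ?case
    by (simp add: passage_part_Suc_Suc exit_part_Suc_Suc algebra_simps)
qed

section \<open>The matchbox process\<close>

abbreviation expected_residue :: "real \<Rightarrow> nat list \<Rightarrow> real" where
  "expected_residue p xs \<equiv> measure_pmf.expectation (residue_dist p xs) real"

lemma finite_set_pmf_residue_dist: "finite (set_pmf (residue_dist p xs))"
proof (induction p xs rule: residue_dist.induct)
  case (1 p xs)
  show ?case
    by (subst residue_dist.simps) (use 1 in \<open>auto simp: Let_def\<close>)
qed

lemma expected_residue_stop: "0 \<in> set xs \<Longrightarrow> expected_residue p xs = real (sum_list xs)"
  by (subst residue_dist.simps) simp

lemma expected_residue_step:
  assumes "xs \<noteq> []" "0 \<notin> set xs" "0 \<le> p" "p \<le> 1"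
  shows "expected_residue p xs =
    p * expected_residue p (take_big xs) + (1 - p) * expected_residue p (take_little xs)"
proof -
  have "expected_residue p xs = measure_pmf.expectation (bernoulli_pmf p \<bind>
      (\<lambda>b. if b then residue_dist p (take_big xs) else residue_dist p (take_little xs))) real"
    using assms by (subst residue_dist.simps) (simp add: Let_def)
  also have "\<dots> = (\<Sum>b\<in>UNIV. pmf (bernoulli_pmf p) b *\<^sub>R
      measure_pmf.expectation (if b then residue_dist p (take_big xs) else residue_dist p (take_little xs)) real)"
    by (rule pmf_expectation_bind) (auto simp: finite_set_pmf_residue_dist)
  finally show ?thesis
    using assms by (simp add: UNIV_bool)
qed

lemma sum_list_take_big_less:
  assumes "xs \<noteq> []" "0 \<notin> set xs"
  shows "sum_list (take_big xs) < sum_list xs"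
proof -
  have "Max (set xs) \<in> set xs"
    using assms(1) by (intro Max_in) auto
  with assms(2) show ?thesis
    unfolding take_big_def by (intro sum_list_dec_first) (auto intro!: gr0I)
qed

lemma sum_list_take_little_less:
  assumes "xs \<noteq> []" "0 \<notin> set xs"
  shows "sum_list (take_little xs) < sum_list xs"
proof -
  have "Min (set xs) \<in> set xs"
    using assms(1) by (intro Min_in) auto
  with assms(2) show ?thesis
    unfolding take_little_def by (intro sum_list_dec_first) (auto intro!: gr0I)
qed

lemma mset_dec_first: "v \<in> set xs \<Longrightarrow> mset (dec_first v xs) = add_mset (v - 1) (mset xs - {#v#})"
  by (induction xs) (auto simp: add_mset_commute)

text \<open>For \<open>a \<le> b\<close> and \<open>c < k - 1\<close> this is the configuration in walk state
  \<open>(a, (k - 1) (b - a) + c)\<close>.\<close>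

definition boxes :: "nat \<Rightarrow> nat \<Rightarrow> nat \<Rightarrow> nat \<Rightarrow> nat multiset" where
  "boxes k a b c = add_mset a (replicate_mset c (Suc b) + replicate_mset (k - 1 - c) b)"

lemma set_mset_boxes:
  "c < k - 1 \<Longrightarrow> set_mset (boxes k a b c) = insert a (insert b (if c = 0 then {} else {Suc b}))"
  by (auto simp: boxes_def)

lemma sum_mset_boxes:
  assumes "c \<le> k - 1"
  shows "sum_mset (boxes k a b c) = a + (k - 1) * b + c"
proof -
  have "c * b + (k - 1 - c) * b = (k - 1) * b"
    using assms by (metis add_mult_distrib le_add_diff_inverse)
  then show ?thesis
    by (simp add: boxes_def algebra_simps)
qed

lemma take_little_boxes:
  assumes "mset xs = boxes k (Suc a) b c" "c < k - 1" "Suc a \<le> b"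
  shows "mset (take_little xs) = boxes k a b c"
proof -
  have set_xs: "set xs = insert (Suc a) (insert b (if c = 0 then {} else {Suc b}))"
    using assms set_mset_boxes by (metis set_mset_mset)
  then have "Min (set xs) = Suc a"
    using assms(3) by (auto intro!: Min_eqI)
  then show ?thesis
    unfolding take_little_def using set_xs assms
    by (subst mset_dec_first) (auto simp: boxes_def intro!: multiset_eqI)
qed

definition big_step :: "nat \<Rightarrow> nat \<times> nat \<Rightarrow> nat \<times> nat" where
  "big_step k = (\<lambda>(a, h). if h = 0 then (a - 1, k - 1) else (a, h - 1))"

lemma take_big_boxes:
  assumes "2 \<le> k" "mset xs = boxes k (Suc a) b c" "c < k - 1" "Suc a \<le> b"
  obtains a' b' c' where "mset (take_big xs) = boxes k a' b' c'" "c' < k - 1" "a' \<le> b'"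
    "(a', (k - 1) * (b' - a') + c') = big_step k (Suc a, (k - 1) * (b - Suc a) + c)"
proof -
  have set_xs: "set xs = insert (Suc a) (insert b (if c = 0 then {} else {Suc b}))"
    using assms set_mset_boxes by (metis set_mset_mset)
  have Max_xs: "Max (set xs) = (if c = 0 then b else Suc b)"
    using set_xs assms(4) by (auto intro!: Max_eqI)
  consider (more) c' where "c = Suc c'" | (less) "c = 0" "Suc a < b" | (equal) "c = 0" "b = Suc a"
    using assms(4) by (cases c) (auto simp: le_less)
  then show ?thesis
  proof cases
    case more
    have "mset (take_big xs) = add_mset b (boxes k (Suc a) b c - {#Suc b#})"
      unfolding take_big_def Max_xs using set_xs assms(2) more by (simp add: mset_dec_first)
    also have "\<dots> = boxes k (Suc a) b c'"
      unfolding boxes_def using assms(3,4) more by (intro multiset_eqI) (simp add: Suc_diff_Suc)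
    finally show ?thesis
      using that assms more by (simp add: big_step_def)
  next
    case less
    obtain e where e: "b - Suc a = Suc e"
      using less by (cases "b - Suc a") auto
    then have "b - 1 - Suc a = e"
      by simp
    with e assms(1) have excess: "(k - 1) * (b - 1 - Suc a) + (k - 2) = (k - 1) * (b - Suc a) - 1"
      by simp
    have "mset (take_big xs) = add_mset (b - 1) (boxes k (Suc a) b 0 - {#b#})"
      unfolding take_big_def Max_xs using set_xs assms(2) less by (simp add: mset_dec_first)
    also have "\<dots> = boxes k (Suc a) (b - 1) (k - 2)"
      unfolding boxes_def using assms(1) less by (intro multiset_eqI) (simp add: numeral_2_eq_2)
    finally show ?thesis
      using that assms less excess by (simp add: big_step_def)
  next
    case equal
    have "mset (take_big xs) = add_mset a (boxes k (Suc a) (Suc a) 0 - {#Suc a#})"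
      unfolding take_big_def Max_xs using set_xs assms(2) equal by (simp add: mset_dec_first)
    also have "\<dots> = boxes k a (Suc a) 0"
      unfolding boxes_def using assms(1) by (intro multiset_eqI) simp
    finally show ?thesis
      using that assms equal by (simp add: big_step_def)
  qed
qed

lemma mean_residue_Suc:
  assumes "0 < k"
  shows "mean_residue k p (Suc a) h =
    p * case_prod (mean_residue k p) (big_step k (Suc a, h)) + (1 - p) * mean_residue k p a (h + (k - 1))"
  using assms by (cases h) (simp_all add: big_step_def algebra_simps)

lemma expected_residue_boxes:
  assumes "2 \<le> k" "0 \<le> p" "p \<le> 1"
  shows "mset xs = boxes k a b c \<Longrightarrow> c < k - 1 \<Longrightarrow> a \<le> b \<Longrightarrow>
    expected_residue p xs = mean_residue k p a ((k - 1) * (b - a) + c)"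
proof (induction "sum_list xs" arbitrary: xs a b c rule: less_induct)
  case (less xs a b c)
  have set_xs: "set xs = insert a (insert b (if c = 0 then {} else {Suc b}))"
    using less.prems set_mset_boxes by (metis set_mset_mset)
  show ?case
  proof (cases a)
    case 0
    have "sum_list xs = (k - 1) * b + c"
      using less.prems 0 sum_mset_boxes[of c k 0 b] by (simp flip: sum_mset_sum_list)
    then show ?thesis
      using set_xs 0 by (simp add: expected_residue_stop)
  next
    case (Suc a0)
    note prems = less.prems[unfolded Suc]
    have xs: "xs \<noteq> []" "0 \<notin> set xs"
      using set_xs Suc less.prems(3) by auto
    have "b - a0 = Suc (b - Suc a0)"
      using prems(3) by simp
    then have little: "expected_residue p (take_little xs)
        = mean_residue k p a0 ((k - 1) * (b - Suc a0) + c + (k - 1))"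
      using less.hyps[OF sum_list_take_little_less[OF xs] take_little_boxes[OF prems]] prems
      by (simp add: ac_simps)
    obtain a' b' c' where big: "mset (take_big xs) = boxes k a' b' c'" "c' < k - 1" "a' \<le> b'"
        "(a', (k - 1) * (b' - a') + c') = big_step k (Suc a0, (k - 1) * (b - Suc a0) + c)"
      by (rule take_big_boxes[OF assms(1) prems])
    have "expected_residue p (take_big xs)
        = case_prod (mean_residue k p) (big_step k (Suc a0, (k - 1) * (b - Suc a0) + c))"
      unfolding big(4)[symmetric] using less.hyps[OF sum_list_take_big_less[OF xs] big(1-3)] by simp
    with little show ?thesis
      using expected_residue_step[OF xs assms(2,3)] mean_residue_Suc[of k p a0] assms(1) Suc
      by simp
  qed
qed

lemma M_eq_mean_residue:
  assumes "2 \<le> k" "0 \<le> p" "p \<le> 1"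
  shows "M k n p = mean_residue k p n 0"
proof -
  have "mset (replicate k n) = boxes k n n 0"
    using assms(1) by (cases k) (simp_all add: boxes_def)
  then show ?thesis
    unfolding M_def using expected_residue_boxes[OF assms] assms(1) by simp
qed

section \<open>The recurrence\<close>

lemma ballot_eq_s:
  assumes "2 \<le> k"
  shows "ballot k (k - 1) u = s k (Suc u)"
proof -
  have "k * Suc u - 1 = k - 1 + k * u" "real k * real (Suc u) - 1 = real (k - 1 + k * u)"
    "real (k - 1) = real k - 1"
    using assms by (simp_all add: of_nat_diff algebra_simps)
  then show ?thesis
    using assms by (simp add: ballot_def s_def)
qed

lemma nat_ceiling_divide_le_iff:
  assumes "0 < c"
  shows "nat \<lceil>real j / real c\<rceil> \<le> x \<longleftrightarrow> j \<le> c * x"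
proof -
  have "nat \<lceil>real j / real c\<rceil> \<le> x \<longleftrightarrow> real j / real c \<le> real x"
    by (simp add: nat_le_iff ceiling_le_iff)
  also have "\<dots> \<longleftrightarrow> j \<le> c * x"
    using assms by (simp add: divide_le_eq mult.commute flip: of_nat_mult)
  finally show ?thesis .
qed

lemma exit_paths_eq_d:
  assumes "2 \<le> k" "2 \<le> n" "k \<le> j" "j \<le> (k - 1) * n"
  shows "exit_paths k (n - 1) (k - 1) j = d k n j"
proof -
  define c where "c = nat \<lceil>real j / real (k - 1)\<rceil>"
  have c_le: "c \<le> x \<longleftrightarrow> j \<le> (k - 1) * x" for x
    unfolding c_def using assms(1) by (intro nat_ceiling_divide_le_iff) simp
  have "1 \<le> c"
    using c_le[of 0] assms(1,3) by simp
  define f where "f l = s k l * free_paths k (n - l) 0 j" for l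
  have "(\<Sum>u<n - 1. ballot k (k - 1) u * free_paths k (n - 1 - u) 0 j) = (\<Sum>l = 1..n - 1. f l)"
    unfolding f_def ballot_eq_s[OF assms(1)] by (simp add: sum.atLeast1_atMost_eq)
  also have "\<dots> = (\<Sum>l = 1..n - c. f l)"
  proof (rule sum.mono_neutral_right)
    show "\<forall>l\<in>{1..n - 1} - {1..n - c}. f l = 0"
    proof
      fix l
      assume "l \<in> {1..n - 1} - {1..n - c}"
      then have "(k - 1) * (n - l) + 0 < j"
        using c_le[of "n - l"] by auto
      from free_paths_eq_0[OF this] show "f l = 0"
        by (simp add: f_def)
    qed
  qed (use \<open>1 \<le> c\<close> in auto)
  also have "\<dots> = (\<Sum>l = 1..n - c. s k l * real ((k * (n - l) - 1 - j) choose (n - l - 1)))"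
  proof (rule sum.cong[OF refl])
    fix l
    assume "l \<in> {1..n - c}"
    then have "j \<le> (k - 1) * (n - l)" "l < n"
      using c_le[of "n - l"] \<open>1 \<le> c\<close> by auto
    moreover have "(k - 1) * (n - l) < k * (n - l)"
      using \<open>l < n\<close> assms(1) by simp
    ultimately have "j < k * (n - l)" "l < n"
      by linarith+
    then show "f l = s k l * real ((k * (n - l) - 1 - j) choose (n - l - 1))"
      by (simp add: f_def free_paths_def)
  qed
  moreover have "free_paths k (n - 1) (k - 1) j = real ((k * n - 2 - j) choose (n - 2))"
  proof -
    have "k * (n - 1) + (k - 1) = k * n - 1"
      using assms(1,2) by (simp add: algebra_simps)
    moreover have "j < k * n - 1"
      using assms by (simp add: algebra_simps)
    ultimately show ?thesis
      using assms(2) by (simp add: free_paths_def numeral_2_eq_2)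
  qed
  ultimately show ?thesis
    using exit_paths_first_passage[of k "n - 1" "k - 1" j] assms by (simp add: d_def c_def)
qed

lemma passage_part_eq:
  assumes "2 \<le> k" "0 \<le> p" "p < 1"
  shows "passage_part k p (n - 1) (k - 1)
    = 1 / (1 - p) * (\<Sum>i\<in>{0<..<n}. s k i * (p ^ (k - 1) * (1 - p)) ^ i * M k (n - i) p)"
proof -
  have "{0<..<n} = {Suc 0..n - 1}"
    by auto
  then have "(\<Sum>i\<in>{0<..<n}. s k i * (p ^ (k - 1) * (1 - p)) ^ i * M k (n - i) p)
      = (\<Sum>u<n - 1. s k (Suc u) * (p ^ (k - 1) * (1 - p)) ^ Suc u * M k (n - Suc u) p)"
    by (simp add: sum.atLeast1_atMost_eq)
  also have "\<dots> = (1 - p) * passage_part k p (n - 1) (k - 1)"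
    unfolding passage_part_def sum_distrib_left
  proof (rule sum.cong[OF refl])
    fix u
    have "(p ^ (k - 1) * (1 - p)) ^ Suc u = (1 - p) * (p ^ (k - 1 + (k - 1) * u) * (1 - p) ^ u)"
      by (simp add: power_mult_distrib power_add power_mult)
    then show "s k (Suc u) * (p ^ (k - 1) * (1 - p)) ^ Suc u * M k (n - Suc u) p
        = (1 - p) * (ballot k (k - 1) u * p ^ (k - 1 + (k - 1) * u) * (1 - p) ^ u
            * mean_residue k p (n - 1 - u) 0)"
      unfolding ballot_eq_s[OF assms(1)] using assms by (simp add: M_eq_mean_residue)
  qed
  finally show ?thesis
    using assms(3) by simp
qed

lemma exit_part_eq_L:
  assumes "2 \<le> k" "2 \<le> n" "p < 1"
  shows "exit_part k p (n - 1) (k - 1) = L k n p"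
proof -
  obtain m where n: "n = Suc m"
    using assms(2) by (cases n) auto
  have exponent: "(k - 1) * (n - 1) + (k - 1) = (k - 1) * n"
    unfolding n by (simp add: mult_Suc_right)
  have "exit_sum k p (n - 1) (k - 1)
      = (\<Sum>j = k..(k - 1) * n. real j * exit_paths k (n - 1) (k - 1) j * (1 / p) ^ j)"
    unfolding exit_sum_def exponent
    by (rule sum.mono_neutral_right) (use assms(2) exit_paths_eq_0_below in auto)
  also have "\<dots> = (\<Sum>j = k..(k - 1) * n. real j * d k n j * (1 / p) ^ j)"
  proof (rule sum.cong[OF refl])
    fix j
    assume "j \<in> {k..(k - 1) * n}"
    then have "exit_paths k (n - 1) (k - 1) j = d k n j"
      using assms(1,2) by (intro exit_paths_eq_d) auto
    then show "real j * exit_paths k (n - 1) (k - 1) j * (1 / p) ^ j = real j * d k n j * (1 / p) ^ j"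
      by simp
  qed
  finally have "exit_sum k p (n - 1) (k - 1) = (\<Sum>j = k..(k - 1) * n. real j * d k n j * (1 / p) ^ j)" .
  moreover have "(1 - p) ^ (n - 1) * p ^ ((k - 1) * (n - 1) + (k - 1))
      = (p ^ (k - 1) * (1 - p)) ^ n * (1 / (1 - p))"
    using assms(3) unfolding n by (simp add: power_mult_distrib power_add mult_ac flip: power_mult)
  ultimately show ?thesis
    unfolding exit_part_def L_def by simp
qed

theorem lemma3p1:
  fixes k :: nat and p :: real
  assumes "k \<ge> 2" and "0 < p" and "p < 1"
  shows "M k 1 p = real k - 1 \<and>
    (\<forall>n\<ge>2. M k n p =
       (1 / (1 - p)) * (\<Sum>i\<in>{0<..<n}. s k i * (p ^ (k - 1) * (1 - p)) ^ i * M k (n - i) p)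
       + L k n p)"
proof
  have walk: "M k n p = mean_residue k p n 0" for n
    using assms by (simp add: M_eq_mean_residue)
  show "M k 1 p = real k - 1"
    using assms(1) by (simp add: walk of_nat_diff)
  show "\<forall>n\<ge>2. M k n p =
       (1 / (1 - p)) * (\<Sum>i\<in>{0<..<n}. s k i * (p ^ (k - 1) * (1 - p)) ^ i * M k (n - i) p)
       + L k n p"
  proof (intro allI impI)
    fix n :: nat
    assume "2 \<le> n"
    then obtain m where n: "n = Suc m"
      by (cases n) auto
    have "M k n p = mean_residue k p (n - 1) (k - 1)"
      by (simp add: walk n)
    also have "\<dots> = passage_part k p (n - 1) (k - 1) + exit_part k p (n - 1) (k - 1)"
      using assms by (intro mean_residue_first_passage) simp_all
    also have "passage_part k p (n - 1) (k - 1)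
        = 1 / (1 - p) * (\<Sum>i\<in>{0<..<n}. s k i * (p ^ (k - 1) * (1 - p)) ^ i * M k (n - i) p)"
      using assms by (intro passage_part_eq) simp_all
    also have "exit_part k p (n - 1) (k - 1) = L k n p"
      using assms \<open>2 \<le> n\<close> by (intro exit_part_eq_L)
    finally show "M k n p =
       (1 / (1 - p)) * (\<Sum>i\<in>{0<..<n}. s k i * (p ^ (k - 1) * (1 - p)) ^ i * M k (n - i) p)
       + L k n p" .
  qed
qed

end
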